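(* Let $\mathcal R$ be a reaction network and $\mathcal U\subseteq\mathcal S$. Let $r_0\in\mathcal R_{\mathcal U}'$, $m\ge1$, $r_{11},\dots,r_{1m}\in\mathcal R_{\mathcal U}$ and $r_1=\oplus_{i=1}^m r_{1i}$, and suppose $r_0\oplus r_1\notin\overline{\mathcal R}_{\mathcal U}$. Then $r_0\in\mathcal R_{\mathcal U}'\setminus\mathcal R_{\mathcal U}$ and $r_0\oplus(\oplus_{i=1}^k r_{1i})\in\overline{\mathcal R}_{\mathcal U}'\setminus\overline{\mathcal R}_{\mathcal U}$ for $k=1,\dots,m-1$. If moreover $r_0\oplus r_1\in\overline{\mathcal R}_0$, then $r_{1m}\in\mathcal R_{\mathcal U}\setminus\mathcal R_{\mathcal U}'$ and $\oplus_{i=k}^m r_{1i}\in\overline{\mathcal R}_{\mathcal U}\setminus\overline{\mathcal R}_{\mathcal U}'$ for $k=1,\dots,m$.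
   Context: Species $S_1,\dots,S_n$ are the unit vectors of $\mathbb{N}_0^n$ and $\mathcal S=\{S_1,\dots,S_n\}$; for $x\in\mathbb{N}_0^n$, $\mathrm{supp}(x)=\{S_k: x^k>0\}$. A reaction network (RN) is a (possibly infinite) subset $\mathcal R\subseteq\mathbb{N}_0^n\times\mathbb{N}_0^n$ containing no $(y,y')$ with $y=y'$; elements $(y,y')$ are reactions $y\to y'$ with reactant $y$ and product $y'$. For $r_1=(y_1,y_1'),\ r_2=(y_2,y_2')$ define $r_1\oplus r_2=(y_1+0\vee(y_2-y_1'),\ y_2'+0\vee(y_1'-y_2))$ ($\vee$ componentwise maximum); it is associative. $\mathrm{cl}(A)$ is the set of all finite $\oplus$-sums of elements of $A$, including $(0,0)$. For $\mathcal U\subseteq\mathcal S$ and a set $B\subseteq\mathbb{N}_0^n\times\mathbb{N}_0^n$ write $B_{\mathcal U}=\{(y,y')\in B:\mathrm{supp}(y)\cap\mathcal U\neq\emptyset\}$ and $B_{\mathcal U}'=\{(y,y')\in B:\mathrm{supp}(y')\cap\mathcal U\neq\emptyset\}$. Set $\overline{\mathcal R}=\mathrm{cl}(\mathcal R)$, $\mathcal R_0=\mathcal R\setminus(\mathcal R_{\mathcal U}\cup\mathcal R_{\mathcal U}')$ and $\overline{\mathcal R}_0=\overline{\mathcal R}\setminus(\overline{\mathcal R}_{\mathcal U}\cup\overline{\mathcal R}_{\mathcal U}')$. *)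

theory Defs
  imports Main
begin

type_synonym 's complex = "'s \<Rightarrow> nat"
type_synonym 's reaction = "'s complex \<times> 's complex"

definition supp :: "'s complex \<Rightarrow> 's set" where
  "supp x = {k. x k > 0}"

definition is_RN :: "'s reaction set \<Rightarrow> bool" where
  "is_RN R \<longleftrightarrow> (\<forall>(y, y') \<in> R. y \<noteq> y')"

text \<open>r1 (+) r2 = (y1 + max 0 (y2 - y1'), y2' + max 0 (y1' - y2)); on nat,
truncated subtraction is exactly max 0 (a - b).\<close>
definition oplus :: "'s reaction \<Rightarrow> 's reaction \<Rightarrow> 's reaction" (infixr "\<oplus>\<^sub>R" 65) where
  "oplus r1 r2 = (\<lambda>k. fst r1 k + (fst r2 k - snd r1 k), \<lambda>k. snd r2 k + (snd r1 k - fst r2 k))"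

fun oplus_list :: "'s reaction list \<Rightarrow> 's reaction" where
  "oplus_list [] = (\<lambda>_. 0, \<lambda>_. 0)"
| "oplus_list (r # rs) = r \<oplus>\<^sub>R oplus_list rs"

definition oplus_seq :: "(nat \<Rightarrow> 's reaction) \<Rightarrow> nat \<Rightarrow> nat \<Rightarrow> 's reaction" where
  "oplus_seq f i j = oplus_list (map f [i..<Suc j])"

text \<open>cl(A): all finite (+)-sums of elements of A, including (0,0).\<close>
definition cl :: "'s reaction set \<Rightarrow> 's reaction set" where
  "cl A = {oplus_list rs | rs. set rs \<subseteq> A}"

definition reac_U :: "'s set \<Rightarrow> 's reaction set \<Rightarrow> 's reaction set" where
  "reac_U U B = {(y, y') \<in> B. supp y \<inter> U \<noteq> {}}"

definition prod_U :: "'s set \<Rightarrow> 's reaction set \<Rightarrow> 's reaction set" where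
  "prod_U U B = {(y, y') \<in> B. supp y' \<inter> U \<noteq> {}}"

definition zero_U :: "'s set \<Rightarrow> 's reaction set \<Rightarrow> 's reaction set" where
  "zero_U U B = B - (reac_U U B \<union> prod_U U B)"

end

theory Submission
  imports Defs
begin

(* The sum a (+) b keeps every reactant of a and every product of b, and a reactant of b
  is missing from the reactant of the sum only if a produces it. Hence, if r0 (+) r1 consumes
  no species of U, neither does r0 nor any prefix r0 (+) r11 (+) ... (+) r1k; since the next
  summand r1(k+1) consumes U, that prefix must produce U. Dually, if the whole sum produces
  nothing in U either, no suffix r1k (+) ... (+) r1m produces U, while it consumes U through
  its first summand. *)

lemma oplus_assoc: "(a \<oplus>\<^sub>R b) \<oplus>\<^sub>R c = a \<oplus>\<^sub>R (b \<oplus>\<^sub>R c)"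
  by (auto simp: oplus_def fun_eq_iff)

lemma oplus_zero_left: "(\<lambda>_. 0, \<lambda>_. 0) \<oplus>\<^sub>R r = r"
  by (simp add: oplus_def)

lemma oplus_zero_right: "r \<oplus>\<^sub>R (\<lambda>_. 0, \<lambda>_. 0) = r"
  by (simp add: oplus_def)

lemma oplus_list_append: "oplus_list (xs @ ys) = oplus_list xs \<oplus>\<^sub>R oplus_list ys"
  by (induction xs) (simp_all add: oplus_zero_left oplus_assoc)

lemma mem_cl: "r \<in> R \<Longrightarrow> r \<in> cl R"
  using oplus_zero_right[of r] by (auto simp: cl_def intro!: exI[of _ "[r]"])

lemma oplus_mem_cl:
  assumes "a \<in> cl R" and "b \<in> cl R"
  shows "a \<oplus>\<^sub>R b \<in> cl R"
proof -
  obtain as bs where "a = oplus_list as" "b = oplus_list bs" "set as \<subseteq> R" "set bs \<subseteq> R"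
    using assms by (auto simp: cl_def)
  then show ?thesis
    by (auto simp: cl_def oplus_list_append[symmetric] intro!: exI[of _ "as @ bs"])
qed

lemma oplus_seq_mem_cl: "(\<And>l. l \<in> {i..j} \<Longrightarrow> f l \<in> R) \<Longrightarrow> oplus_seq f i j \<in> cl R"
  unfolding oplus_seq_def cl_def by (intro CollectI exI[of _ "map f [i..<Suc j]"]) auto

lemma oplus_seq_split:
  assumes "i \<le> Suc k" and "k \<le> j"
  shows "oplus_seq f i j = oplus_seq f i k \<oplus>\<^sub>R oplus_seq f (Suc k) j"
proof -
  have "[i..<Suc j] = [i..<Suc k] @ [Suc k..<Suc j]"
    using assms upt_add_eq_append[of i "Suc k" "j - k"] by simp
  then show ?thesis
    by (simp add: oplus_seq_def oplus_list_append)
qed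

lemma oplus_seq_Cons: "i \<le> j \<Longrightarrow> oplus_seq f i j = f i \<oplus>\<^sub>R oplus_seq f (Suc i) j"
  using oplus_seq_split[of i i j f] by (simp add: oplus_seq_def oplus_zero_right)

lemma oplus_seq_single: "oplus_seq f i i = f i"
  by (simp add: oplus_seq_def oplus_zero_right)

lemma reac_U_iff: "r \<in> reac_U U B \<longleftrightarrow> r \<in> B \<and> supp (fst r) \<inter> U \<noteq> {}"
  by (cases r) (auto simp: reac_U_def)

lemma prod_U_iff: "r \<in> prod_U U B \<longleftrightarrow> r \<in> B \<and> supp (snd r) \<inter> U \<noteq> {}"
  by (cases r) (auto simp: prod_U_def)

lemma supp_fst_oplus_left: "supp (fst a) \<subseteq> supp (fst (a \<oplus>\<^sub>R b))"
  by (auto simp: supp_def oplus_def)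

lemma supp_snd_oplus_right: "supp (snd b) \<subseteq> supp (snd (a \<oplus>\<^sub>R b))"
  by (auto simp: supp_def oplus_def)

lemma supp_fst_oplus_right: "supp (fst b) \<subseteq> supp (fst (a \<oplus>\<^sub>R b)) \<union> supp (snd a)"
  by (auto simp: supp_def oplus_def)

lemma supp_fst_oplus_seq: "i \<le> j \<Longrightarrow> supp (fst (f i)) \<subseteq> supp (fst (oplus_seq f i j))"
  using supp_fst_oplus_left by (simp add: oplus_seq_Cons)

lemma oplus_free_reactant_left:
  "supp (fst (a \<oplus>\<^sub>R b)) \<inter> U = {} \<Longrightarrow> supp (fst a) \<inter> U = {}"
  using supp_fst_oplus_left[of a b] by blast

lemma oplus_free_reactant_produces:
  "supp (fst (a \<oplus>\<^sub>R b)) \<inter> U = {} \<Longrightarrow> supp (fst b) \<inter> U \<noteq> {} \<Longrightarrow> supp (snd a) \<inter> U \<noteq> {}"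
  using supp_fst_oplus_right[of b a] by blast

lemma oplus_free_product_right:
  "supp (snd (a \<oplus>\<^sub>R b)) \<inter> U = {} \<Longrightarrow> supp (snd b) \<inter> U = {}"
  using supp_snd_oplus_right[of b a] by blast

lemma oplus_seq_prefix_produces:
  assumes free: "supp (fst (a \<oplus>\<^sub>R oplus_seq f i j)) \<inter> U = {}"
    and "i \<le> Suc k" and "k < j"
    and next_consumes: "supp (fst (f (Suc k))) \<inter> U \<noteq> {}"
  shows "supp (fst (a \<oplus>\<^sub>R oplus_seq f i k)) \<inter> U = {}"
    and "supp (snd (a \<oplus>\<^sub>R oplus_seq f i k)) \<inter> U \<noteq> {}"
proof -
  have split: "supp (fst ((a \<oplus>\<^sub>R oplus_seq f i k) \<oplus>\<^sub>R oplus_seq f (Suc k) j)) \<inter> U = {}"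
    using free assms(2,3) oplus_seq_split[of i k j f] by (simp add: oplus_assoc)
  then show "supp (fst (a \<oplus>\<^sub>R oplus_seq f i k)) \<inter> U = {}"
    by (rule oplus_free_reactant_left)
  have "supp (fst (oplus_seq f (Suc k) j)) \<inter> U \<noteq> {}"
    using next_consumes supp_fst_oplus_seq[of "Suc k" j f] \<open>k < j\<close> by auto
  with split show "supp (snd (a \<oplus>\<^sub>R oplus_seq f i k)) \<inter> U \<noteq> {}"
    by (rule oplus_free_reactant_produces)
qed

lemma oplus_seq_suffix_free_product:
  assumes free: "supp (snd (a \<oplus>\<^sub>R oplus_seq f i j)) \<inter> U = {}" and "i \<le> k" and "k \<le> j"
  shows "supp (snd (oplus_seq f k j)) \<inter> U = {}"
proof (cases "k = i")
  case True
  then show ?thesis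
    using free by (simp add: oplus_free_product_right)
next
  case False
  then have "a \<oplus>\<^sub>R oplus_seq f i j = (a \<oplus>\<^sub>R oplus_seq f i (k - 1)) \<oplus>\<^sub>R oplus_seq f k j"
    using assms(2,3) oplus_seq_split[of i "k - 1" j f] by (simp add: oplus_assoc)
  then show ?thesis
    using free oplus_free_product_right by metis
qed

theorem lemma4p5:
  fixes R :: "('s::finite) reaction set" and U :: "'s set"
    and r0 :: "'s reaction" and r1i :: "nat \<Rightarrow> 's reaction" and m :: nat
  assumes "is_RN R"
    and "r0 \<in> prod_U U R"
    and "m \<ge> 1"
    and "\<forall>i\<in>{1..m}. r1i i \<in> reac_U U R"
    and "r0 \<oplus>\<^sub>R oplus_seq r1i 1 m \<notin> reac_U U (cl R)"
  shows "r0 \<in> prod_U U R - reac_U U R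
      \<and> (\<forall>k\<in>{1..m-1}. r0 \<oplus>\<^sub>R oplus_seq r1i 1 k \<in> prod_U U (cl R) - reac_U U (cl R))
      \<and> (r0 \<oplus>\<^sub>R oplus_seq r1i 1 m \<in> zero_U U (cl R) \<longrightarrow>
           r1i m \<in> reac_U U R - prod_U U R
         \<and> (\<forall>k\<in>{1..m}. oplus_seq r1i k m \<in> reac_U U (cl R) - prod_U U (cl R)))"
proof -
  define W where "W = r0 \<oplus>\<^sub>R oplus_seq r1i 1 m"
  have consumes: "supp (fst (r1i i)) \<inter> U \<noteq> {}" and r1i_R: "r1i i \<in> R" if "i \<in> {1..m}" for i
    using assms(4) that by (simp_all add: reac_U_iff)
  have r0_cl: "r0 \<in> cl R"
    using assms(2) by (simp add: prod_U_iff mem_cl)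
  have seq_cl: "oplus_seq r1i i j \<in> cl R" if "1 \<le> i" "j \<le> m" for i j
    using that r1i_R by (intro oplus_seq_mem_cl) auto
  have W_cl: "W \<in> cl R"
    unfolding W_def using r0_cl seq_cl[of 1 m] by (simp add: oplus_mem_cl)
  then have W_free: "supp (fst W) \<inter> U = {}"
    using assms(5) by (simp add: reac_U_iff W_def)
  then have "r0 \<notin> reac_U U R"
    unfolding W_def by (auto simp: reac_U_iff dest: oplus_free_reactant_left)
  moreover have "r0 \<oplus>\<^sub>R oplus_seq r1i 1 k \<in> prod_U U (cl R) - reac_U U (cl R)"
    if "k \<in> {1..m-1}" for k
  proof -
    have "k < m" using that by auto
    then show ?thesis
      using oplus_seq_prefix_produces[OF W_free[unfolded W_def], of k] consumes[of "Suc k"]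
        r0_cl seq_cl[of 1 k] by (simp add: reac_U_iff prod_U_iff oplus_mem_cl)
  qed
  moreover have suffix: "oplus_seq r1i k m \<in> reac_U U (cl R) - prod_U U (cl R)"
    if "W \<in> zero_U U (cl R)" "k \<in> {1..m}" for k
    using that W_cl oplus_seq_suffix_free_product[of r0 r1i 1 m U k] consumes[of k]
      supp_fst_oplus_seq[of k m r1i] seq_cl[of k m]
    by (auto simp: W_def zero_U_def reac_U_iff prod_U_iff)
  moreover have "r1i m \<in> reac_U U R - prod_U U R" if "W \<in> zero_U U (cl R)"
    using suffix[OF that, of m] assms(3,4) by (simp add: oplus_seq_single reac_U_iff prod_U_iff)
  ultimately show ?thesis
    using assms(2) unfolding W_def by blast
qed

end
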